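(* Let $\mathcal{X}=\{1,\dots,n\}$, let $\pi$ be a strictly positive probability distribution on $\mathcal{X}$, let $P$ be a $\pi$-reversible transition matrix, let $G$ be the Gibbs kernel induced by a partition $\mathcal{X}=\bigsqcup_{i=1}^k\mathcal{O}_i$, and for $\alpha\in[0,1]$ let $A_\alpha=\alpha P+(1-\alpha)G$. Assume the partition is such that $\operatorname{Tr}(\overline{P})=0$. Then $\operatorname*{argmin}_{\alpha\in[0,1]}\|A_\alpha-\Pi\|_{F,\pi}^2=\{\alpha^*\}$ with $\alpha^*=\dfrac{k}{\operatorname{Tr}(P^2)+k}$.
   Context: $\pi$-reversible means $\pi(x)P(x,y)=\pi(y)P(y,x)$. Gibbs kernel: $G(x,y)=\pi(y)/\pi(\mathcal{O}(x))$ if $y\in\mathcal{O}(x)$ and $0$ otherwise, $\mathcal{O}(x)$ the block containing $x$, $\pi(\mathcal{O})=\sum_{z\in\mathcal{O}}\pi(z)$. Projection chain: $\overline{P}(i,j)=\frac{1}{\pi(\mathcal{O}_i)}\sum_{x\in\mathcal{O}_i,\,y\in\mathcal{O}_j}\pi(x)P(x,y)$. $\Pi$ is the matrix with every row equal to $\pi$; $\|M\|_{F,\pi}^2=\operatorname{Tr}(M^*M)$ with $M^*(x,y)=\pi(y)M(y,x)/\pi(x)$. *)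

theory Defs
  imports Complex_Main "HOL-Library.Disjoint_Sets"
begin

text \<open>State space: a finite type 'x (standing for {1..n}). Matrices are functions 'x => 'x => real.\<close>

definition prob_dist :: "('x::finite \<Rightarrow> real) \<Rightarrow> bool" where
  "prob_dist \<pi> \<longleftrightarrow> (\<forall>x. \<pi> x > 0) \<and> (\<Sum>x\<in>UNIV. \<pi> x) = 1"

definition transition_matrix :: "('x::finite \<Rightarrow> 'x \<Rightarrow> real) \<Rightarrow> bool" where
  "transition_matrix P \<longleftrightarrow> (\<forall>x y. P x y \<ge> 0) \<and> (\<forall>x. (\<Sum>y\<in>UNIV. P x y) = 1)"

definition reversible :: "('x \<Rightarrow> real) \<Rightarrow> ('x \<Rightarrow> 'x \<Rightarrow> real) \<Rightarrow> bool" where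
  "reversible \<pi> P \<longleftrightarrow> (\<forall>x y. \<pi> x * P x y = \<pi> y * P y x)"

definition block_of :: "'x set set \<Rightarrow> 'x \<Rightarrow> 'x set" where
  "block_of \<O> x = (THE B. B \<in> \<O> \<and> x \<in> B)"

definition mass :: "('x \<Rightarrow> real) \<Rightarrow> 'x set \<Rightarrow> real" where
  "mass \<pi> B = (\<Sum>z\<in>B. \<pi> z)"

definition gibbs_kernel :: "('x \<Rightarrow> real) \<Rightarrow> 'x set set \<Rightarrow> 'x \<Rightarrow> 'x \<Rightarrow> real" where
  "gibbs_kernel \<pi> \<O> x y =
     (if y \<in> block_of \<O> x then \<pi> y / mass \<pi> (block_of \<O> x) else 0)"

definition projection_chain ::
  "('x \<Rightarrow> real) \<Rightarrow> ('x \<Rightarrow> 'x \<Rightarrow> real) \<Rightarrow> 'x set \<Rightarrow> 'x set \<Rightarrow> real" where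
  "projection_chain \<pi> P Oi Oj = (1 / mass \<pi> Oi) * (\<Sum>x\<in>Oi. \<Sum>y\<in>Oj. \<pi> x * P x y)"

definition trace :: "('x::finite \<Rightarrow> 'x \<Rightarrow> real) \<Rightarrow> real" where
  "trace M = (\<Sum>x\<in>UNIV. M x x)"

definition mat_mult :: "('x::finite \<Rightarrow> 'x \<Rightarrow> real) \<Rightarrow> ('x \<Rightarrow> 'x \<Rightarrow> real) \<Rightarrow> 'x \<Rightarrow> 'x \<Rightarrow> real" where
  "mat_mult M N x y = (\<Sum>z\<in>UNIV. M x z * N z y)"

definition adjoint :: "('x \<Rightarrow> real) \<Rightarrow> ('x \<Rightarrow> 'x \<Rightarrow> real) \<Rightarrow> 'x \<Rightarrow> 'x \<Rightarrow> real" where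
  "adjoint \<pi> M x y = \<pi> y * M y x / \<pi> x"

definition frob_sq :: "('x::finite \<Rightarrow> real) \<Rightarrow> ('x \<Rightarrow> 'x \<Rightarrow> real) \<Rightarrow> real" where
  "frob_sq \<pi> M = trace (mat_mult (adjoint \<pi> M) M)"

definition Pi_mat :: "('x \<Rightarrow> real) \<Rightarrow> 'x \<Rightarrow> 'x \<Rightarrow> real" where
  "Pi_mat \<pi> x y = \<pi> y"

end

theory Submission
  imports Defs
begin

(*
  P, G and \<Pi> are \<pi>-reversible, hence so is A_\<alpha> - \<Pi>, and its squared Frobenius norm is
  just Tr((A_\<alpha> - \<Pi>)^2).  Expanding, Tr(G P) = Tr(P-bar) = 0, Tr(G^2) = k (G is the
  \<pi>-orthogonal projection onto the functions constant on blocks), and every trace involving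
  \<Pi> equals 1 because P and G are stochastic.  So the norm is the strictly convex quadratic
  (Tr(P^2) + k) \<alpha>^2 - 2 k \<alpha> + k - 1, whose vertex k / (Tr(P^2) + k) lies in [0,1].
*)

lemma block_of_eq:
  assumes "partition_on A \<O>" "B \<in> \<O>" "x \<in> B"
  shows "block_of \<O> x = B"
  unfolding block_of_def
proof (rule the_equality)
  show "C = B" if "C \<in> \<O> \<and> x \<in> C" for C
    using that assms disjointD[OF partition_onD2[OF assms(1)]] by blast
qed (use assms in blast)

lemma block_of_mem:
  assumes "partition_on A \<O>" "x \<in> A"
  shows "block_of \<O> x \<in> \<O>" "x \<in> block_of \<O> x"
proof -
  obtain B where "B \<in> \<O>" "x \<in> B"
    using assms partition_onD1 by blast
  then show "block_of \<O> x \<in> \<O>" "x \<in> block_of \<O> x"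
    using block_of_eq[OF assms(1)] by simp_all
qed

lemma mass_pos:
  assumes "partition_on (UNIV::'x::finite set) \<O>" "B \<in> \<O>" "\<And>x. \<pi> x > 0"
  shows "mass \<pi> B > 0"
  unfolding mass_def using partition_onD3[OF assms(1)] assms(2,3)
  by (intro sum_pos) auto

lemma gibbs_kernel_eq:
  assumes "partition_on A \<O>" "B \<in> \<O>" "x \<in> B"
  shows "gibbs_kernel \<pi> \<O> x z = (if z \<in> B then \<pi> z / mass \<pi> B else 0)"
  unfolding gibbs_kernel_def using block_of_eq[OF assms] by simp

lemma sum_gibbs_kernel_mult:
  assumes "partition_on (UNIV::'x::finite set) \<O>" "B \<in> \<O>" "x \<in> B"
  shows "(\<Sum>z\<in>UNIV. gibbs_kernel \<pi> \<O> x z * f z) = (\<Sum>z\<in>B. \<pi> z * f z) / mass \<pi> B"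
proof -
  have "(\<Sum>z\<in>UNIV. gibbs_kernel \<pi> \<O> x z * f z)
      = (\<Sum>z\<in>UNIV. if z \<in> B then \<pi> z * f z / mass \<pi> B else 0)"
    by (intro sum.cong) (simp_all add: gibbs_kernel_eq[OF assms])
  then show ?thesis
    by (simp add: sum_divide_distrib flip: sum.inter_restrict)
qed

lemma gibbs_kernel_row_sum:
  assumes "partition_on (UNIV::'x::finite set) \<O>" "\<And>x. \<pi> x > 0"
  shows "(\<Sum>z\<in>UNIV. gibbs_kernel \<pi> \<O> x z) = 1"
proof -
  note B = block_of_mem[OF assms(1) UNIV_I, of x]
  have "(\<Sum>z\<in>UNIV. gibbs_kernel \<pi> \<O> x z * 1)
      = mass \<pi> (block_of \<O> x) / mass \<pi> (block_of \<O> x)"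
    unfolding sum_gibbs_kernel_mult[OF assms(1) B] mass_def by simp
  then show ?thesis
    using mass_pos[OF assms(1) B(1), of \<pi>] assms(2) by simp
qed

lemma reversible_gibbs_kernel:
  assumes "partition_on (UNIV::'x set) \<O>"
  shows "reversible \<pi> (gibbs_kernel \<pi> \<O>)"
  unfolding reversible_def
proof (intro allI)
  fix x y
  note B = block_of_mem[OF assms UNIV_I, of x]
  show "\<pi> x * gibbs_kernel \<pi> \<O> x y = \<pi> y * gibbs_kernel \<pi> \<O> y x"
  proof (cases "y \<in> block_of \<O> x")
    case True
    then show ?thesis
      using B by (simp add: gibbs_kernel_eq[OF assms B(1)])
  next
    case False
    then have "x \<notin> block_of \<O> y"
      using block_of_eq[OF assms] block_of_mem[OF assms UNIV_I] by metis
    then show ?thesis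
      using False by (simp add: gibbs_kernel_def)
  qed
qed

lemma reversible_Pi_mat: "reversible \<pi> (Pi_mat \<pi>)"
  by (simp add: reversible_def Pi_mat_def)

lemma reversible_lincomb:
  assumes "reversible \<pi> A" "reversible \<pi> B" "reversible \<pi> C"
  shows "reversible \<pi> (\<lambda>x y. a * A x y + b * B x y - C x y)"
  using assms unfolding reversible_def by (simp add: algebra_simps)

lemma frob_sq_reversible:
  assumes "\<And>x. \<pi> x > 0" "reversible \<pi> M"
  shows "frob_sq \<pi> M = trace (mat_mult M M)"
proof -
  have "adjoint \<pi> M = M"
    using assms unfolding reversible_def adjoint_def
    by (intro ext) (metis less_irrefl nonzero_mult_div_cancel_left)
  then show ?thesis
    by (simp add: frob_sq_def)
qed

lemma trace_mat_mult_commute: "trace (mat_mult A B) = trace (mat_mult B A)"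
  unfolding trace_def mat_mult_def by (subst sum.swap) (simp add: mult.commute)

lemma trace_mat_mult_lincomb_left:
  "trace (mat_mult (\<lambda>x y. a * A x y + b * B x y - C x y) M)
     = a * trace (mat_mult A M) + b * trace (mat_mult B M) - trace (mat_mult C M)"
  unfolding trace_def mat_mult_def
  by (simp add: algebra_simps sum.distrib sum_subtractf sum_distrib_left)

lemma trace_mat_mult_lincomb_right:
  "trace (mat_mult M (\<lambda>x y. a * A x y + b * B x y - C x y))
     = a * trace (mat_mult M A) + b * trace (mat_mult M B) - trace (mat_mult M C)"
  by (simp only: trace_mat_mult_commute[of M] trace_mat_mult_lincomb_left)

lemma trace_mat_mult_Pi_mat:
  assumes "\<And>x. (\<Sum>y\<in>UNIV. A x y) = 1" "(\<Sum>x\<in>UNIV. \<pi> x) = 1"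
  shows "trace (mat_mult A (Pi_mat \<pi>)) = 1"
  using assms by (simp add: trace_def mat_mult_def Pi_mat_def mult.commute flip: sum_distrib_left)

lemma trace_gibbs_kernel_mult:
  assumes "partition_on (UNIV::'x::finite set) \<O>"
  shows "trace (mat_mult (gibbs_kernel \<pi> \<O>) P) = (\<Sum>B\<in>\<O>. projection_chain \<pi> P B B)"
proof -
  have "trace (mat_mult (gibbs_kernel \<pi> \<O>) P)
      = (\<Sum>B\<in>\<O>. \<Sum>x\<in>B. \<Sum>z\<in>UNIV. gibbs_kernel \<pi> \<O> x z * P z x)"
    unfolding trace_def mat_mult_def by (rule sum.partition[OF finite_UNIV assms])
  also have "\<dots> = (\<Sum>B\<in>\<O>. \<Sum>x\<in>B. (\<Sum>z\<in>B. \<pi> z * P z x) / mass \<pi> B)"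
    by (intro sum.cong refl) (simp add: sum_gibbs_kernel_mult[OF assms])
  also have "\<dots> = (\<Sum>B\<in>\<O>. projection_chain \<pi> P B B)"
    unfolding projection_chain_def
    by (intro sum.cong refl) (subst sum.swap, simp add: sum_divide_distrib)
  finally show ?thesis .
qed

lemma trace_gibbs_kernel_square:
  assumes "partition_on (UNIV::'x::finite set) \<O>" "\<And>x. \<pi> x > 0"
  shows "trace (mat_mult (gibbs_kernel \<pi> \<O>) (gibbs_kernel \<pi> \<O>)) = card \<O>"
proof -
  have "(\<Sum>x\<in>B. \<Sum>z\<in>UNIV. gibbs_kernel \<pi> \<O> x z * gibbs_kernel \<pi> \<O> z x) = 1"
    if B: "B \<in> \<O>" for B
  proof -
    have m: "mass \<pi> B > 0"
      using mass_pos[OF assms(1) B, of \<pi>] assms(2) by simp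
    have "(\<Sum>z\<in>UNIV. gibbs_kernel \<pi> \<O> x z * gibbs_kernel \<pi> \<O> z x)
        = (\<Sum>z\<in>B. \<pi> z * (\<pi> x / mass \<pi> B)) / mass \<pi> B" if "x \<in> B" for x
      using that
      by (simp only: sum_gibbs_kernel_mult[OF assms(1) B that])
        (simp add: gibbs_kernel_eq[OF assms(1) B])
    also have "\<dots> x = \<pi> x / mass \<pi> B" for x
      using m by (simp only: flip: sum_distrib_right mass_def) simp
    finally have "(\<Sum>x\<in>B. \<Sum>z\<in>UNIV. gibbs_kernel \<pi> \<O> x z * gibbs_kernel \<pi> \<O> z x)
        = (\<Sum>x\<in>B. \<pi> x / mass \<pi> B)"
      by simp
    also have "\<dots> = 1"
      using m by (simp add: mass_def flip: sum_divide_distrib)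
    finally show ?thesis .
  qed
  then have "(\<Sum>B\<in>\<O>. \<Sum>x\<in>B. \<Sum>z\<in>UNIV. gibbs_kernel \<pi> \<O> x z * gibbs_kernel \<pi> \<O> z x)
      = card \<O>"
    by simp
  then show ?thesis
    unfolding trace_def mat_mult_def sum.partition[OF finite_UNIV assms(1), symmetric] .
qed

lemma frob_sq_interpolation:
  fixes a :: real
  assumes "prob_dist \<pi>" "transition_matrix P" "reversible \<pi> P" "partition_on UNIV \<O>"
    and orth: "trace (mat_mult (gibbs_kernel \<pi> \<O>) P) = 0"
  shows "frob_sq \<pi> (\<lambda>x y. a * P x y + (1 - a) * gibbs_kernel \<pi> \<O> x y - Pi_mat \<pi> x y)
       = (trace (mat_mult P P) + card \<O>) * a\<^sup>2 - 2 * real (card \<O>) * a + (real (card \<O>) - 1)"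
proof -
  let ?G = "gibbs_kernel \<pi> \<O>" and ?\<Pi> = "Pi_mat \<pi>"
  have pos: "\<And>x. \<pi> x > 0" and norm: "(\<Sum>x\<in>UNIV. \<pi> x) = 1"
    using assms(1) by (auto simp: prob_dist_def)
  have P_rows: "\<And>x. (\<Sum>y\<in>UNIV. P x y) = 1"
    using assms(2) by (simp add: transition_matrix_def)
  have \<Pi>_rows: "\<And>x. (\<Sum>y\<in>UNIV. ?\<Pi> x y) = 1"
    using norm by (simp add: Pi_mat_def)
  have P\<Pi>: "trace (mat_mult P ?\<Pi>) = 1"
    by (rule trace_mat_mult_Pi_mat[OF P_rows norm])
  have G\<Pi>: "trace (mat_mult ?G ?\<Pi>) = 1"
    by (rule trace_mat_mult_Pi_mat[OF gibbs_kernel_row_sum[OF assms(4) pos] norm])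
  have \<Pi>\<Pi>: "trace (mat_mult ?\<Pi> ?\<Pi>) = 1"
    by (rule trace_mat_mult_Pi_mat[OF \<Pi>_rows norm])
  have "frob_sq \<pi> (\<lambda>x y. a * P x y + (1 - a) * ?G x y - ?\<Pi> x y)
      = trace (mat_mult (\<lambda>x y. a * P x y + (1 - a) * ?G x y - ?\<Pi> x y)
                        (\<lambda>x y. a * P x y + (1 - a) * ?G x y - ?\<Pi> x y))"
    by (intro frob_sq_reversible pos reversible_lincomb assms(3) reversible_gibbs_kernel
        assms(4) reversible_Pi_mat)
  also have "\<dots> =
        a * (a * trace (mat_mult P P) + (1 - a) * trace (mat_mult P ?G)
             - trace (mat_mult P ?\<Pi>))
      + (1 - a) * (a * trace (mat_mult ?G P) + (1 - a) * trace (mat_mult ?G ?G)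
             - trace (mat_mult ?G ?\<Pi>))
      - (a * trace (mat_mult ?\<Pi> P) + (1 - a) * trace (mat_mult ?\<Pi> ?G)
             - trace (mat_mult ?\<Pi> ?\<Pi>))"
    by (simp only: trace_mat_mult_lincomb_left trace_mat_mult_lincomb_right)
  also have "\<dots> = (trace (mat_mult P P) + card \<O>) * a\<^sup>2 - 2 * real (card \<O>) * a
      + (real (card \<O>) - 1)"
    unfolding trace_mat_mult_commute[of P ?G] trace_mat_mult_commute[of ?\<Pi> P]
      trace_mat_mult_commute[of ?\<Pi> ?G] orth P\<Pi> G\<Pi> \<Pi>\<Pi> trace_gibbs_kernel_square[OF assms(4) pos]
    by (simp add: power2_eq_square algebra_simps)
  finally show ?thesis .
qed

lemma argmin_quadratic:
  fixes q p c :: real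
  assumes "q > 0" "p / q \<in> S"
  shows "{a\<in>S. \<forall>b\<in>S. q * a\<^sup>2 - 2 * p * a + c \<le> q * b\<^sup>2 - 2 * p * b + c} = {p / q}"
proof -
  define m where "m = p / q"
  have square: "q * b\<^sup>2 - 2 * p * b + c = q * (b - m)\<^sup>2 + (c - p\<^sup>2 / q)" for b
    using assms(1) by (simp add: m_def power2_eq_square field_simps)
  have "(\<forall>b\<in>S. q * a\<^sup>2 - 2 * p * a + c \<le> q * b\<^sup>2 - 2 * p * b + c) \<longleftrightarrow> a = m" for a
  proof
    assume "\<forall>b\<in>S. q * a\<^sup>2 - 2 * p * a + c \<le> q * b\<^sup>2 - 2 * p * b + c"
    then have "q * (a - m)\<^sup>2 \<le> q * (m - m)\<^sup>2"
      using assms(2) unfolding square m_def by fastforce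
    then show "a = m"
      using assms(1) by (simp add: mult_le_0_iff)
  qed (use assms(1) in \<open>simp add: square\<close>)
  then show ?thesis
    using assms(2) unfolding m_def by blast
qed

theorem proposition4p7:
  fixes \<pi> :: "'x::finite \<Rightarrow> real" and P :: "'x \<Rightarrow> 'x \<Rightarrow> real" and \<O> :: "'x set set"
  assumes "prob_dist \<pi>"
    and "transition_matrix P"
    and "reversible \<pi> P"
    and "partition_on UNIV \<O>"
    and "(\<Sum>B\<in>\<O>. projection_chain \<pi> P B B) = 0"
  shows "{\<alpha>\<in>{0..1::real}. \<forall>\<beta>\<in>{0..1}.
            frob_sq \<pi> (\<lambda>x y. \<alpha> * P x y + (1 - \<alpha>) * gibbs_kernel \<pi> \<O> x y - Pi_mat \<pi> x y)
         \<le> frob_sq \<pi> (\<lambda>x y. \<beta> * P x y + (1 - \<beta>) * gibbs_kernel \<pi> \<O> x y - Pi_mat \<pi> x y)}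
       = {real (card \<O>) / (trace (mat_mult P P) + real (card \<O>))}"
proof -
  have "\<O> \<noteq> {}"
    using partition_onD1[OF assms(4)] by auto
  then have "card \<O> \<ge> 1"
    using finite_elements[OF finite_UNIV assms(4)] by (simp add: Suc_le_eq card_gt_0_iff)
  moreover have "trace (mat_mult P P) \<ge> 0"
    using assms(2) unfolding trace_def mat_mult_def transition_matrix_def
    by (intro sum_nonneg) auto
  ultimately have "trace (mat_mult P P) + card \<O> > 0"
    and "card \<O> / (trace (mat_mult P P) + card \<O>) \<in> {0..1}"
    by auto
  then show ?thesis
    unfolding frob_sq_interpolation[OF assms(1-4)
        trans[OF trace_gibbs_kernel_mult[OF assms(4)] assms(5)]]
    by (rule argmin_quadratic)
qed

end
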